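(* Let $\varphi$ be a finite conjunction of literals of the two forms $x\in y$ and $x = y\setminus z$ (with $x,y,z$ set variables), with finite set of variables $\mathrm{Vars}(\varphi)$. Let $M$ be a set assignment over $\mathrm{Vars}(\varphi)$ satisfying $\varphi$; let $\bar x,\bar y\in\mathrm{Vars}(\varphi)$, let $\overline{M}$ be a set assignment over $\mathrm{Vars}(\varphi)$ satisfying $\varphi$ with $\overline{M}\bar x\neq \overline{M}\bar y$, and let $\mathfrak{t}$ be a set belonging to exactly one of $\overline{M}\bar x$, $\overline{M}\bar y$. Fix a set $\mathfrak{s}$ with $\mathrm{rk}(\mathfrak{s})>\mathrm{rk}(M)$. Define $\mathsf{V}_0=\{u\in\mathrm{Vars}(\varphi)\mid \mathfrak{t}\in\overline{M}u\}$; $\mathsf{V}_n=\{u\in\mathrm{Vars}(\varphi)\mid Mu\cap\{Mw\mid w\in\mathsf{V}_{n-1}\}\neq\emptyset\}$ for $n\ge1$; $M_0v=Mv\cup\{\mathfrak{s}\}$ if $v\in\mathsf{V}_0$ and $M_0v=Mv$ otherwise; for $n\ge1$, $M_nv=M_{n-1}v\cup\{M_{n-1}u\mid u\in\mathsf{V}_{n-1},\ Mu\in Mv\}$ if $v\in\mathsf{V}_n$ and $M_nv=M_{n-1}v$ otherwise. Then for all $x\in\mathrm{Vars}(\varphi)$, $n\in\mathbb{N}$ and every set $\mathfrak{q}\in M_nx$, if $\mathrm{rk}(\mathfrak{q})<\mathrm{rk}(\mathfrak{s})$ then $\mathfrak{q}\in Mx$.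
   Context: A set assignment is a map from a finite set of set variables into the von Neumann universe $\mathcal{V}=\bigcup_\alpha\mathcal{V}_\alpha$, $\mathcal{V}_\alpha=\bigcup_{\beta<\alpha}\mathcal{P}(\mathcal{V}_\beta)$; it satisfies $x\in y$ iff $Mx\in My$ and $x=y\setminus z$ iff $Mx=My\setminus Mz$. The rank $\mathrm{rk}(s)$ of a set $s$ is the least ordinal $\alpha$ with $s\subseteq\mathcal{V}_\alpha$, and $\mathrm{rk}(M)=\max\{\mathrm{rk}(Mx)\mid x\in\mathrm{dom}(M)\}$. *)

theory Defs
  imports Main
begin

text \<open>A universe of well-founded sets is represented abstractly by a carrier type 'u
  together with the extension map elts (elts x is the set of members of x).
  We require extensionality, well-foundedness of membership, and closure under
  adjoining finitely many elements (all the set formation the lemma needs).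
  The von Neumann universe is such a structure.\<close>

definition vn_universe :: "('u \<Rightarrow> 'u set) \<Rightarrow> bool" where
  "vn_universe elts \<longleftrightarrow>
     inj elts \<and> wf {(x, y). x \<in> elts y} \<and>
     (\<forall>x F. finite F \<longrightarrow> (\<exists>y. elts y = elts x \<union> F))"

definition adjoin :: "('u \<Rightarrow> 'u set) \<Rightarrow> 'u \<Rightarrow> 'u set \<Rightarrow> 'u" where
  "adjoin elts x F = (THE y. elts y = elts x \<union> F)"

text \<open>Rank comparison: rk a \<le> rk b and rk a < rk b, where
  rk a = sup of (rk a' + 1) over members a' of a.\<close>
inductive rank_le and rank_lt for elts :: "'u \<Rightarrow> 'u set" where
  rank_leI: "(\<forall>a'\<in>elts a. rank_lt elts a' b) \<Longrightarrow> rank_le elts a b"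
| rank_ltI: "b' \<in> elts b \<Longrightarrow> rank_le elts a b' \<Longrightarrow> rank_lt elts a b"

datatype 'v lit = Mem 'v 'v | Diff 'v 'v 'v

fun lit_vars :: "'v lit \<Rightarrow> 'v set" where
  "lit_vars (Mem x y) = {x, y}"
| "lit_vars (Diff x y z) = {x, y, z}"

definition Vars :: "'v lit list \<Rightarrow> 'v set" where
  "Vars \<phi> = (\<Union>l\<in>set \<phi>. lit_vars l)"

fun lit_holds :: "('u \<Rightarrow> 'u set) \<Rightarrow> ('v \<Rightarrow> 'u) \<Rightarrow> 'v lit \<Rightarrow> bool" where
  "lit_holds elts M (Mem x y) \<longleftrightarrow> M x \<in> elts (M y)"
| "lit_holds elts M (Diff x y z) \<longleftrightarrow> elts (M x) = elts (M y) - elts (M z)"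

definition satisfies :: "('u \<Rightarrow> 'u set) \<Rightarrow> ('v \<Rightarrow> 'u) \<Rightarrow> 'v lit list \<Rightarrow> bool" where
  "satisfies elts M \<phi> \<longleftrightarrow> (\<forall>l\<in>set \<phi>. lit_holds elts M l)"

primrec Vset :: "('u \<Rightarrow> 'u set) \<Rightarrow> 'v lit list \<Rightarrow> ('v \<Rightarrow> 'u) \<Rightarrow> ('v \<Rightarrow> 'u) \<Rightarrow> 'u
                 \<Rightarrow> nat \<Rightarrow> 'v set" where
  "Vset elts \<phi> M Mb t 0 = {u \<in> Vars \<phi>. t \<in> elts (Mb u)}"
| "Vset elts \<phi> M Mb t (Suc n) =
     {u \<in> Vars \<phi>. elts (M u) \<inter> {M w | w. w \<in> Vset elts \<phi> M Mb t n} \<noteq> {}}"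

primrec Mseq :: "('u \<Rightarrow> 'u set) \<Rightarrow> 'v lit list \<Rightarrow> ('v \<Rightarrow> 'u) \<Rightarrow> ('v \<Rightarrow> 'u) \<Rightarrow> 'u
                 \<Rightarrow> 'u \<Rightarrow> nat \<Rightarrow> 'v \<Rightarrow> 'u" where
  "Mseq elts \<phi> M Mb t s 0 v =
     (if v \<in> Vset elts \<phi> M Mb t 0 then adjoin elts (M v) {s} else M v)"
| "Mseq elts \<phi> M Mb t s (Suc n) v =
     (if v \<in> Vset elts \<phi> M Mb t (Suc n)
      then adjoin elts (Mseq elts \<phi> M Mb t s n v)
             {Mseq elts \<phi> M Mb t s n u | u. u \<in> Vset elts \<phi> M Mb t n \<and> M u \<in> elts (M v)}
      else Mseq elts \<phi> M Mb t s n v)"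

end

theory Submission
  imports Defs
begin

text \<open>Every element added in passing from M to M_n is either \<open>s\<close> itself or some M_m u
  with u \<in> V_m, and by induction on m every such M_m u has rank above that of \<open>s\<close>. So every
  new element has rank at least rk(s), and an element of smaller rank was already in M.\<close>

lemma rank_leD: "rank_le elts a b \<Longrightarrow> a' \<in> elts a \<Longrightarrow> rank_lt elts a' b"
  by (auto elim: rank_le.cases)

lemma rank_ltE:
  assumes "rank_lt elts a b"
  obtains b' where "b' \<in> elts b" "rank_le elts a b'"
  using assms by (auto elim: rank_lt.cases)

context
  fixes elts :: "'u \<Rightarrow> 'u set"
  assumes wf_mem: "wf {(x, y). x \<in> elts y}"
begin

lemma rank_le_refl: "rank_le elts a a"
  using wf_mem
proof (induction a rule: wf_induct_rule)
  case (less a)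
  then show ?case by (blast intro: rank_leI rank_ltI)
qed

lemma rank_le_trans: "rank_le elts a b \<Longrightarrow> rank_le elts b c \<Longrightarrow> rank_le elts a c"
  using wf_mem
proof (induction a arbitrary: b c rule: wf_induct_rule)
  case (less a)
  have "rank_lt elts a' c" if a': "a' \<in> elts a" for a'
  proof -
    obtain b' where b': "b' \<in> elts b" "rank_le elts a' b'"
      using rank_leD[OF less.prems(1) a'] by (rule rank_ltE)
    obtain c' where c': "c' \<in> elts c" "rank_le elts b' c'"
      using rank_leD[OF less.prems(2) b'(1)] by (rule rank_ltE)
    from a' have "(a', a) \<in> {(x, y). x \<in> elts y}" by simp
    from c'(1) less.IH[OF this b'(2) c'(2)] show ?thesis by (rule rank_ltI)
  qed
  then show ?case by (blast intro: rank_leI)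
qed

lemma rank_lt_imp_le: "rank_lt elts a b \<Longrightarrow> rank_le elts a b"
  using wf_mem
proof (induction a arbitrary: b rule: wf_induct_rule)
  case (less a)
  from less.prems obtain b' where b': "b' \<in> elts b" "rank_le elts a b'"
    by (rule rank_ltE)
  have "rank_lt elts a' b" if a': "a' \<in> elts a" for a'
  proof -
    from a' have "(a', a) \<in> {(x, y). x \<in> elts y}" by simp
    from b'(1) less.IH[OF this rank_leD[OF b'(2) a']] show ?thesis by (rule rank_ltI)
  qed
  then show ?case by (blast intro: rank_leI)
qed

lemma rank_lt_irrefl: "\<not> rank_lt elts a a"
  using wf_mem
proof (induction a rule: wf_induct_rule)
  case (less a)
  show ?case
  proof
    assume "rank_lt elts a a"
    then obtain a' where a': "a' \<in> elts a" "rank_le elts a a'"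
      by (rule rank_ltE)
    from a'(1) have "(a', a) \<in> {(x, y). x \<in> elts y}" by simp
    with less.IH rank_leD[OF a'(2) a'(1)] show False by blast
  qed
qed

lemma rank_lt_le_trans:
  assumes "rank_lt elts a b" "rank_le elts b c"
  shows "rank_lt elts a c"
proof -
  obtain b' where b': "b' \<in> elts b" "rank_le elts a b'"
    using assms(1) by (rule rank_ltE)
  obtain c' where c': "c' \<in> elts c" "rank_le elts b' c'"
    using rank_leD[OF assms(2) b'(1)] by (rule rank_ltE)
  show ?thesis using c'(1) rank_le_trans[OF b'(2) c'(2)] by (rule rank_ltI)
qed

end

lemma vn_universe_wf: "vn_universe elts \<Longrightarrow> wf {(x, y). x \<in> elts y}"
  unfolding vn_universe_def by blast

lemma elts_adjoin:
  assumes "vn_universe elts" "finite F"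
  shows "elts (adjoin elts x F) = elts x \<union> F"
proof -
  from assms obtain y where y: "elts y = elts x \<union> F" and inj: "inj elts"
    unfolding vn_universe_def by blast
  have "(THE y. elts y = elts x \<union> F) = y"
  proof (rule the_equality)
    fix y' assume "elts y' = elts x \<union> F"
    with y have "elts y' = elts y" by simp
    with inj show "y' = y" by (rule injD)
  qed (rule y)
  with y show ?thesis unfolding adjoin_def by simp
qed

lemma finite_Vars: "finite (Vars \<phi>)"
proof -
  have "finite (lit_vars l)" for l :: "'v lit" by (cases l) auto
  then show ?thesis unfolding Vars_def by auto
qed

lemma Vset_subset_Vars: "Vset elts \<phi> M Mb t n \<subseteq> Vars \<phi>"
  by (cases n) auto

context
  fixes elts :: "'u \<Rightarrow> 'u set"
    and \<phi> :: "'v lit list"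
    and M Mb :: "'v \<Rightarrow> 'u"
    and t s :: 'u
  assumes univ: "vn_universe elts"
begin

lemma elts_Mseq_0:
  "elts (Mseq elts \<phi> M Mb t s 0 v) =
     (if v \<in> Vset elts \<phi> M Mb t 0 then insert s (elts (M v)) else elts (M v))"
  using elts_adjoin[OF univ] by (simp del: Vset.simps)

lemma elts_Mseq_Suc:
  "elts (Mseq elts \<phi> M Mb t s (Suc n) v) =
     (if v \<in> Vset elts \<phi> M Mb t (Suc n)
      then elts (Mseq elts \<phi> M Mb t s n v) \<union>
        {Mseq elts \<phi> M Mb t s n u | u. u \<in> Vset elts \<phi> M Mb t n \<and> M u \<in> elts (M v)}
      else elts (Mseq elts \<phi> M Mb t s n v))"
proof -
  have "{Mseq elts \<phi> M Mb t s n u | u. u \<in> Vset elts \<phi> M Mb t n \<and> M u \<in> elts (M v)}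
      \<subseteq> Mseq elts \<phi> M Mb t s n ` Vars \<phi>"
    using Vset_subset_Vars[of elts \<phi> M Mb t n] by blast
  then have "finite {Mseq elts \<phi> M Mb t s n u | u. u \<in> Vset elts \<phi> M Mb t n \<and> M u \<in> elts (M v)}"
    using finite_Vars finite_subset by blast
  then show ?thesis using elts_adjoin[OF univ] by (simp del: Vset.simps)
qed

lemma rank_lt_Mseq_if_Vset:
  "u \<in> Vset elts \<phi> M Mb t n \<Longrightarrow> rank_lt elts s (Mseq elts \<phi> M Mb t s n u)"
proof (induction n arbitrary: u)
  case 0
  then have "s \<in> elts (Mseq elts \<phi> M Mb t s 0 u)"
    by (simp only: elts_Mseq_0 if_True insert_iff simp_thms)
  then show ?case using rank_le_refl[OF vn_universe_wf[OF univ]] by (rule rank_ltI)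
next
  case (Suc n)
  then obtain w where w: "w \<in> Vset elts \<phi> M Mb t n" "M w \<in> elts (M u)" by auto
  with Suc.prems have "Mseq elts \<phi> M Mb t s n w \<in> elts (Mseq elts \<phi> M Mb t s (Suc n) u)"
    by (simp only: elts_Mseq_Suc if_True) blast
  then show ?case using rank_lt_imp_le[OF vn_universe_wf[OF univ] Suc.IH[OF w(1)]]
    by (rule rank_ltI)
qed

lemma mem_Mseq_imp_mem_or_rank_le:
  "q \<in> elts (Mseq elts \<phi> M Mb t s n x) \<Longrightarrow> q \<in> elts (M x) \<or> rank_le elts s q"
proof (induction n arbitrary: q)
  case 0
  then have "q \<in> insert s (elts (M x))"
    by (simp only: elts_Mseq_0 split: if_splits) blast+
  then show ?case using rank_le_refl[OF vn_universe_wf[OF univ]] by blast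
next
  case (Suc n)
  then consider "q \<in> elts (Mseq elts \<phi> M Mb t s n x)"
    | u where "u \<in> Vset elts \<phi> M Mb t n" "q = Mseq elts \<phi> M Mb t s n u"
    by (simp only: elts_Mseq_Suc split: if_splits) blast+
  then show ?case
  proof cases
    case 1
    then show ?thesis by (rule Suc.IH)
  next
    case 2
    then show ?thesis
      using rank_lt_imp_le[OF vn_universe_wf[OF univ] rank_lt_Mseq_if_Vset] by blast
  qed
qed

end

theorem lemma7:
  fixes elts :: "'u \<Rightarrow> 'u set"
    and \<phi> :: "'v lit list"
    and M Mb :: "'v \<Rightarrow> 'u"
    and xb yb :: 'v
    and t s :: 'u
  assumes univ: "vn_universe elts"
    and satM: "satisfies elts M \<phi>"
    and satMb: "satisfies elts Mb \<phi>"
    and xb: "xb \<in> Vars \<phi>" and yb: "yb \<in> Vars \<phi>"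
    and neq: "Mb xb \<noteq> Mb yb"
    and t: "(t \<in> elts (Mb xb)) \<noteq> (t \<in> elts (Mb yb))"
    and s: "\<forall>v\<in>Vars \<phi>. rank_lt elts (M v) s"
  shows "\<forall>x\<in>Vars \<phi>. \<forall>n q. q \<in> elts (Mseq elts \<phi> M Mb t s n x) \<longrightarrow>
           rank_lt elts q s \<longrightarrow> q \<in> elts (M x)"
proof (intro ballI allI impI)
  fix x n q
  assume q: "q \<in> elts (Mseq elts \<phi> M Mb t s n x)" and q_rank: "rank_lt elts q s"
  have wf: "wf {(x, y). x \<in> elts y}" using univ by (rule vn_universe_wf)
  have "\<not> rank_le elts s q"
    using rank_lt_le_trans[OF wf q_rank] rank_lt_irrefl[OF wf] by blast
  with mem_Mseq_imp_mem_or_rank_le[OF univ q] show "q \<in> elts (M x)" by blast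
qed

end
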